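(* Let $\mathcal{H}^c_{A_{n-1}}$ be the degenerate affine Hecke–Clifford algebra of type $A_{n-1}$ and let $w_{(n)}=s_1s_2\cdots s_{n-1}$, the $n$-cycle $(1\,2\,\cdots\,n)$. For every subset $I\subseteq\{1,\dots,n\}$ with $|I|$ even there is $\epsilon\in\{1,-1\}$ with $w_{(n)}c_I-\epsilon\, w_{(n)}\in[\mathcal{H}^c_{A_{n-1}},\mathcal{H}^c_{A_{n-1}}]$.
   Context: $\mathcal{H}^c_{A_{n-1}}$ (parameter $u\in\mathbb{C}$) is the $\mathbb{C}$-algebra generated by commuting $x_1,\dots,x_n$, Clifford generators $c_1,\dots,c_n$ ($c_i^2=1$, $c_ic_j=-c_jc_i$ for $i\ne j$) and the symmetric group $S_n$ (simple reflections $s_i=(i,i+1)$), with $\mathbb{C}[x]$, the Clifford algebra and $\mathbb{C}S_n$ subalgebras and relations $x_ic_i=-c_ix_i$, $x_ic_j=c_jx_i$ ($i\ne j$), $\sigma c_i=c_{\sigma(i)}\sigma$ ($\sigma\in S_n$), $x_{i+1}s_i-s_ix_i=u(1-c_{i+1}c_i)$, $x_js_i=s_ix_j$ ($j\ne i,i+1$). For $I=\{i_1<\dots<i_m\}$, $c_I=c_{i_1}\cdots c_{i_m}$. $[H,H]$ denotes the linear span of all commutators $hh'-h'h$. *)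

theory Defs
  imports Complex_Main "HOL-Combinatorics.Transposition" "HOL-Combinatorics.Permutations"
begin

text \<open>A unital associative C-algebra is encoded as a ring together with a central
unital ring homomorphism emb from the complex numbers (the scalars).\<close>

definition central_scalars :: "(complex \<Rightarrow> 'a::ring_1) \<Rightarrow> bool" where
  "central_scalars emb \<longleftrightarrow>
     emb 1 = 1 \<and> (\<forall>a b. emb (a + b) = emb a + emb b) \<and>
     (\<forall>a b. emb (a * b) = emb a * emb b) \<and> (\<forall>a y. emb a * y = y * emb a)"

inductive_set comm_span :: "(complex \<Rightarrow> 'a::ring_1) \<Rightarrow> 'a set" for emb where
  zero: "0 \<in> comm_span emb"
| comm: "a * b - b * a \<in> comm_span emb"
| add: "x \<in> comm_span emb \<Longrightarrow> y \<in> comm_span emb \<Longrightarrow> x + y \<in> comm_span emb"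
| smult: "x \<in> comm_span emb \<Longrightarrow> emb z * x \<in> comm_span emb"

definition HC_relations ::
  "nat \<Rightarrow> complex \<Rightarrow> (complex \<Rightarrow> 'a::ring_1) \<Rightarrow> (nat \<Rightarrow> 'a) \<Rightarrow> (nat \<Rightarrow> 'a)
     \<Rightarrow> ((nat \<Rightarrow> nat) \<Rightarrow> 'a) \<Rightarrow> bool" where
  "HC_relations n u emb x c T \<longleftrightarrow>
     central_scalars emb \<and>
     (\<forall>i\<in>{1..n}. \<forall>j\<in>{1..n}. x i * x j = x j * x i) \<and>
     (\<forall>i\<in>{1..n}. c i * c i = 1) \<and>
     (\<forall>i\<in>{1..n}. \<forall>j\<in>{1..n}. i \<noteq> j \<longrightarrow> c i * c j = - (c j * c i)) \<and>
     T id = 1 \<and>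
     (\<forall>\<sigma> \<tau>. \<sigma> permutes {1..n} \<longrightarrow> \<tau> permutes {1..n} \<longrightarrow> T (\<sigma> \<circ> \<tau>) = T \<sigma> * T \<tau>) \<and>
     (\<forall>i\<in>{1..n}. x i * c i = - (c i * x i)) \<and>
     (\<forall>i\<in>{1..n}. \<forall>j\<in>{1..n}. i \<noteq> j \<longrightarrow> x i * c j = c j * x i) \<and>
     (\<forall>\<sigma> i. \<sigma> permutes {1..n} \<longrightarrow> i \<in> {1..n} \<longrightarrow> T \<sigma> * c i = c (\<sigma> i) * T \<sigma>) \<and>
     (\<forall>i. 1 \<le> i \<and> i < n \<longrightarrow>
        x (i+1) * T (transpose i (i+1)) - T (transpose i (i+1)) * x i
          = emb u * (1 - c (i+1) * c i)) \<and>
     (\<forall>i j. 1 \<le> i \<and> i < n \<longrightarrow> j \<in> {1..n} \<longrightarrow> j \<noteq> i \<longrightarrow> j \<noteq> i+1 \<longrightarrow>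
        x j * T (transpose i (i+1)) = T (transpose i (i+1)) * x j)"

definition w_cycle :: "nat \<Rightarrow> ((nat \<Rightarrow> nat) \<Rightarrow> 'a::ring_1) \<Rightarrow> 'a" where
  "w_cycle n T = prod_list (map (\<lambda>i. T (transpose i (i+1))) [1..<n])"

definition cliff_prod :: "(nat \<Rightarrow> 'a::ring_1) \<Rightarrow> nat set \<Rightarrow> 'a" where
  "cliff_prod c I = prod_list (map c (sorted_list_of_set I))"

end

theory Submission
  imports Defs
begin

text \<open>Since \<open>w c\<^sub>k = c\<^sub>k\<^sub>+\<^sub>1 w\<close>, the commutator \<open>[w c', c\<^sub>k\<^sub>+\<^sub>1]\<close> shows
  \<open>w c' c\<^sub>k\<^sub>+\<^sub>1 \<equiv> w c\<^sub>k c'\<close> modulo \<open>[H,H]\<close>. As the Clifford generators commute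
  up to sign, any factor \<open>c\<^sub>k\<^sub>+\<^sub>1\<close> of a Clifford word after \<open>w\<close> can be moved to the end and
  thereby lowered to \<open>c\<^sub>k\<close>, at the cost of a sign. Lowering all indices to 1 turns
  \<open>w c\<^sub>I\<close> into \<open>\<plusminus> w c\<^sub>1\<^bsup>|I|\<^esup> = \<plusminus> w\<close>, because \<open>|I|\<close> is even.\<close>

lemma comm_span_uminus: "a \<in> comm_span emb \<Longrightarrow> - a \<in> comm_span emb"
proof (induction rule: comm_span.induct)
  case zero
  show ?case by (simp add: comm_span.zero)
next
  case (comm a b)
  show ?case using comm_span.comm[of b a emb] by simp
next
  case (add x y)
  then show ?case using comm_span.add[of "- x" emb "- y"] by (simp add: add.commute)
next
  case (smult x z)
  then show ?case using comm_span.smult[of "- x" emb z] by simp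
qed

definition sign_cong :: "(complex \<Rightarrow> 'a::ring_1) \<Rightarrow> 'a \<Rightarrow> 'a \<Rightarrow> bool" where
  "sign_cong emb a b \<longleftrightarrow> (\<exists>\<epsilon>::int. \<epsilon> \<in> {1, -1} \<and> a - of_int \<epsilon> * b \<in> comm_span emb)"

lemma sign_cong_if_eq_or_eq_neg: "a = b \<or> a = - b \<Longrightarrow> sign_cong emb a b"
proof -
  assume "a = b \<or> a = - b"
  then have "a - of_int 1 * b \<in> comm_span emb \<or> a - of_int (- 1) * b \<in> comm_span emb"
    by (auto simp: comm_span.zero)
  then show ?thesis unfolding sign_cong_def by blast
qed

lemma sign_cong_mult_commute: "sign_cong emb (a * b) (b * a)"
  unfolding sign_cong_def using comm_span.comm[of a b emb] by (intro exI[of _ 1]) simp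

lemma sign_cong_trans:
  assumes "sign_cong emb a b" and "sign_cong emb b d"
  shows "sign_cong emb a d"
proof -
  obtain e where e: "e \<in> {1, -1::int}" "a - of_int e * b \<in> comm_span emb"
    using assms(1) unfolding sign_cong_def by blast
  obtain f where f: "f \<in> {1, -1::int}" "b - of_int f * d \<in> comm_span emb"
    using assms(2) unfolding sign_cong_def by blast
  have "of_int e * (b - of_int f * d) \<in> comm_span emb"
    using e(1) f(2) comm_span_uminus[OF f(2)] by auto
  then have "(a - of_int e * b) + of_int e * (b - of_int f * d) \<in> comm_span emb"
    by (rule comm_span.add[OF e(2)])
  moreover have "(a - of_int e * b) + of_int e * (b - of_int f * d) = a - of_int (e * f) * d"
    by (simp add: algebra_simps)
  ultimately have "a - of_int (e * f) * d \<in> comm_span emb" by simp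
  moreover have "e * f \<in> {1, -1}" using e(1) f(1) by auto
  ultimately show ?thesis unfolding sign_cong_def by blast
qed

lemma mult_prod_list_commute_up_to_sign:
  fixes a :: "'a::ring_1"
  assumes "\<And>b. b \<in> set bs \<Longrightarrow> a * b = b * a \<or> a * b = - (b * a)"
  shows "a * prod_list bs = prod_list bs * a \<or> a * prod_list bs = - (prod_list bs * a)"
  using assms
proof (induction bs)
  case Nil
  show ?case by simp
next
  case (Cons b bs)
  let ?P = "prod_list bs"
  have ab: "a * b = b * a \<or> a * b = - (b * a)" using Cons.prems by simp
  have aP: "a * ?P = ?P * a \<or> a * ?P = - (?P * a)" using Cons by simp
  have "a * (b * ?P) = b * (a * ?P) \<or> a * (b * ?P) = - (b * (a * ?P))"
    using ab by (auto simp: mult.assoc[symmetric])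
  moreover have "b * (a * ?P) = b * ?P * a \<or> b * (a * ?P) = - (b * ?P * a)"
    using aP by (auto simp: mult.assoc)
  ultimately have "a * (b * ?P) = b * ?P * a \<or> a * (b * ?P) = - (b * ?P * a)"
    by auto
  then show ?case by simp
qed

lemma prod_list_mult_conj:
  fixes f :: "'b \<Rightarrow> 'a::monoid_mult" and c :: "'c \<Rightarrow> 'a"
  assumes "\<And>s j. s \<in> set ss \<Longrightarrow> j \<in> A \<Longrightarrow> f s * c j = c (\<pi> s j) * f s"
    and "\<And>s j. s \<in> set ss \<Longrightarrow> j \<in> A \<Longrightarrow> \<pi> s j \<in> A"
    and "j \<in> A"
  shows "prod_list (map f ss) * c j
           = c (fold (\<lambda>s \<sigma>. \<sigma> \<circ> \<pi> s) ss id j) * prod_list (map f ss)"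
  using assms
proof (induction ss arbitrary: j rule: rev_induct)
  case Nil
  show ?case by simp
next
  case (snoc s ss)
  let ?P = "prod_list (map f ss)" and ?\<sigma> = "fold (\<lambda>s \<sigma>. \<sigma> \<circ> \<pi> s)"
  have "prod_list (map f (ss @ [s])) * c j = ?P * (f s * c j)"
    by (simp add: mult.assoc)
  also have "\<dots> = ?P * c (\<pi> s j) * f s"
    using snoc.prems by (simp add: mult.assoc)
  also have "\<dots> = c (?\<sigma> ss id (\<pi> s j)) * ?P * f s"
    by (subst snoc.IH) (use snoc.prems in auto)
  also have "\<dots> = c (?\<sigma> (ss @ [s]) id j) * prod_list (map f (ss @ [s]))"
    by (simp add: mult.assoc)
  finally show ?case .
qed

lemma fold_transpose_upt_apply:
  "fold (\<lambda>i \<sigma>. \<sigma> \<circ> transpose i (i + 1)) [a..<m] id j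
     = (if a \<le> j \<and> j < m then j + 1 else if j = m \<and> a \<le> m then a else j)"
  by (induction m arbitrary: j) (auto simp: transpose_def)

lemma w_cycle_mult_c:
  assumes "HC_relations n u emb x c T" and "1 \<le> k" and "k < n"
  shows "w_cycle n T * c k = c (k + 1) * w_cycle n T"
proof -
  have T_mult_c: "\<And>\<sigma> j. \<sigma> permutes {1..n} \<Longrightarrow> j \<in> {1..n} \<Longrightarrow> T \<sigma> * c j = c (\<sigma> j) * T \<sigma>"
    using assms(1) unfolding HC_relations_def by blast
  have transpose_permutes: "transpose i (i + 1) permutes {1..n}" if "i \<in> set [1..<n]" for i
    using that by (intro permutes_swap_id) auto
  have "w_cycle n T * c k
      = c (fold (\<lambda>i \<sigma>. \<sigma> \<circ> transpose i (i + 1)) [1..<n] id k) * w_cycle n T"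
    unfolding w_cycle_def
  proof (rule prod_list_mult_conj[where A = "{1..n}"])
    fix i j assume i: "i \<in> set [1..<n]" and j: "j \<in> {1..n}"
    show "T (transpose i (i + 1)) * c j = c (transpose i (i + 1) j) * T (transpose i (i + 1))"
      using T_mult_c[OF transpose_permutes[OF i] j] .
    show "transpose i (i + 1) j \<in> {1..n}"
      using j by (simp only: permutes_in_image[OF transpose_permutes[OF i]])
  qed (use assms(2,3) in simp)
  then show ?thesis
    unfolding fold_transpose_upt_apply using assms(2,3) by simp
qed

lemma mult_clifford_word_sign_cong:
  fixes w :: "'a::ring_1" and c :: "nat \<Rightarrow> 'a"
  assumes c_square: "\<And>i. i \<in> {1..n} \<Longrightarrow> c i * c i = 1"
    and c_anticomm: "\<And>i j. i \<in> {1..n} \<Longrightarrow> j \<in> {1..n} \<Longrightarrow> i \<noteq> j \<Longrightarrow> c i * c j = - (c j * c i)"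
    and w_shift: "\<And>k. 1 \<le> k \<Longrightarrow> k < n \<Longrightarrow> w * c k = c (k + 1) * w"
  shows "set L \<subseteq> {1..n} \<Longrightarrow> even (length L) \<Longrightarrow> sign_cong emb (w * prod_list (map c L)) w"
proof (induction "sum_list L" arbitrary: L rule: less_induct)
  case less
  show ?case
  proof (cases "\<forall>i \<in> set L. i = 1")
    case True
    show ?thesis
    proof (cases "L = []")
      case False
      then have "c 1 * c 1 = 1" using less.prems(1) c_square by (cases L) auto
      moreover obtain q where "length L = 2 * q" using less.prems(2) by blast
      moreover have "map c L = replicate (length L) (c 1)"
        using True by (intro replicate_eqI) auto
      ultimately have "prod_list (map c L) = 1"
        by (simp add: prod_list_replicate power_mult power2_eq_square)
      then show ?thesis by (simp add: sign_cong_if_eq_or_eq_neg)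
    qed (simp add: sign_cong_if_eq_or_eq_neg)
  next
    case False
    then obtain y L1 L2 where L: "L = L1 @ y # L2" and "y \<noteq> 1"
      by (meson split_list)
    then have y: "2 \<le> y" "y \<le> n" using less.prems(1) by auto
    let ?L' = "L1 @ L2" and ?C = "\<lambda>M. prod_list (map c M)"
    have L'_sub: "set ?L' \<subseteq> {1..n}" using less.prems(1) L by auto
    have "c y * ?C L2 = ?C L2 * c y \<or> c y * ?C L2 = - (?C L2 * c y)"
    proof (rule mult_prod_list_commute_up_to_sign)
      fix b assume "b \<in> set (map c L2)"
      then obtain i where "i \<in> set L2" "b = c i" by auto
      then show "c y * b = b * c y \<or> c y * b = - (b * c y)"
        using L'_sub y c_anticomm[of y i] by (cases "i = y") auto
    qed
    moreover have "w * ?C L = w * ?C L1 * (c y * ?C L2)"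
      and "w * ?C ?L' * c y = w * ?C L1 * (?C L2 * c y)"
      unfolding L by (simp_all add: mult.assoc)
    ultimately have move: "sign_cong emb (w * ?C L) (w * ?C ?L' * c y)"
      by (intro sign_cong_if_eq_or_eq_neg) auto
    have "c y * w = w * c (y - 1)"
      using w_shift[of "y - 1"] y by simp
    then have shift: "c y * (w * ?C ?L') = w * ?C ((y - 1) # ?L')"
      by (simp add: mult.assoc[symmetric])
    have lowered: "sign_cong emb (w * ?C ((y - 1) # ?L')) w"
    proof (rule less.hyps)
      show "sum_list ((y - 1) # ?L') < sum_list L" using L y by simp
      show "set ((y - 1) # ?L') \<subseteq> {1..n}" using L'_sub y by auto
      show "even (length ((y - 1) # ?L'))" using less.prems(2) L by simp
    qed
    show ?thesis
      using sign_cong_trans[OF sign_cong_trans[OF move sign_cong_mult_commute]] lowered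
      unfolding shift .
  qed
qed

theorem lemma3p1p2:
  fixes n :: nat and u :: complex and emb :: "complex \<Rightarrow> 'a::ring_1"
    and x c :: "nat \<Rightarrow> 'a" and T :: "(nat \<Rightarrow> nat) \<Rightarrow> 'a" and I :: "nat set"
  assumes "HC_relations n u emb x c T"
    and "I \<subseteq> {1..n}" and "even (card I)"
  shows "\<exists>\<epsilon>::int. \<epsilon> \<in> {1, -1} \<and>
           w_cycle n T * cliff_prod c I - of_int \<epsilon> * w_cycle n T \<in> comm_span emb"
proof -
  have "finite I" using assms(2) finite_subset by blast
  have "sign_cong emb (w_cycle n T * prod_list (map c (sorted_list_of_set I))) (w_cycle n T)"
  proof (rule mult_clifford_word_sign_cong)
    show "\<And>i. i \<in> {1..n} \<Longrightarrow> c i * c i = 1"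
      and "\<And>i j. i \<in> {1..n} \<Longrightarrow> j \<in> {1..n} \<Longrightarrow> i \<noteq> j \<Longrightarrow> c i * c j = - (c j * c i)"
      using assms(1) unfolding HC_relations_def by blast+
    show "\<And>k. 1 \<le> k \<Longrightarrow> k < n \<Longrightarrow> w_cycle n T * c k = c (k + 1) * w_cycle n T"
      using w_cycle_mult_c[OF assms(1)] .
    show "set (sorted_list_of_set I) \<subseteq> {1..n}" "even (length (sorted_list_of_set I))"
      using \<open>finite I\<close> assms(2,3) by simp_all
  qed
  then show ?thesis unfolding sign_cong_def cliff_prod_def .
qed

end
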